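(* Let $m>0$, $K\neq 0$ and $H\in\mathbb{R}$, and consider the Schwarzschild metric written in the constant-mean-curvature form described in the context, on the exterior region $r>2m$. Let $\sigma_+$ and $\sigma_-$ be any solutions on $(2m,\infty)$ of the wave phase equations $$\Big(1-\tfrac{2m}{r}\Big)\frac{3}{K}\frac{d\sigma_\pm}{dr}=v\,P^{-1/2}+b_\pm ,$$ with $b_+=+1,\ b_-=-1$ if $K<0$ and $b_+=-1,\ b_-=+1$ if $K>0$. Then: (i) $\sigma_+$ and $\sigma_-$ are strictly monotonic functions of $r$ on $(2m,\infty)$; (ii) $\sigma_+(r)$ has a finite limit as $r\to\infty$ (the outgoing phase coordinate is bounded in the outward direction); (iii) $\sigma_-(r)$ has a finite limit as $r\to 2m^+$, and $d\sigma_-/dr$ remains bounded in magnitude and bounded away from zero on $(2m,R]$ for every $R>2m$, if and only if the naked shift reversal condition holds, i.e. if and only if $3H/K>8m^3$ (equivalently: $H$ and $K$ have the same sign and $(3H/K)^{1/3}>2m$; for $K<0$ this reads $H<\tfrac{8}{3}m^3K$). Consequently, the naked shift reversal condition is necessary and sufficient for the existence of bounded wave phase coordinates on the exterior part of a constant-mean-curvature slice.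
   Context: The spherically symmetric constant-mean-curvature (CMC) slicing of the Schwarzschild spacetime of mass $m$ is given, in coordinates $(t,r,\theta,\varphi)$ with $r$ the areal radius, by the metric $$ds^2=-\Big(1-\tfrac{2m}{r}\Big)dt^2+2vP^{-1/2}\,dt\,dr+r^4P^{-1}dr^2+r^2\,d\Omega^2,$$ where $d\Omega^2$ is the unit round two-sphere metric, $v(r)=Kr^3/3-H$, $P(r)=v^2+(1-2m/r)r^4$, $K$ is the (constant) mean curvature of the slices $t=\text{const}$ and $H$ is a real integration constant. On $r>2m$ one has $P>0$. The wave phase equations above express that $U_\pm=t-\frac{3}{K}\sigma_\pm(r)$ are null functions ($g^{\mu\nu}\partial_\mu U_\pm\partial_\nu U_\pm=0$), so outgoing/ingoing waves move at constant speed in $\sigma_+$/$\sigma_-$. The radial shift vector component of this slicing is $N^r=r^{-4}v\sqrt{P}$; it changes sign at $r_0=(3H/K)^{1/3}$ when $HK>0$, and the "naked shift reversal condition" is that this reversal occurs outside the horizon, $r_0>2m$, i.e. $3H/K>8m^3$. *)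

theory Defs
  imports "HOL-Analysis.Analysis"
begin

definition cmc_v :: "real \<Rightarrow> real \<Rightarrow> real \<Rightarrow> real" where
  "cmc_v K H r = K * r ^ 3 / 3 - H"

definition cmc_P :: "real \<Rightarrow> real \<Rightarrow> real \<Rightarrow> real \<Rightarrow> real" where
  "cmc_P m K H r = (cmc_v K H r) ^ 2 + (1 - 2 * m / r) * r ^ 4"

definition b_plus :: "real \<Rightarrow> real" where
  "b_plus K = (if K < 0 then 1 else -1)"

definition b_minus :: "real \<Rightarrow> real" where
  "b_minus K = (if K < 0 then -1 else 1)"

definition wave_phase_solution ::
  "real \<Rightarrow> real \<Rightarrow> real \<Rightarrow> real \<Rightarrow> (real \<Rightarrow> real) \<Rightarrow> bool" where
  "wave_phase_solution m K H b \<sigma> \<longleftrightarrow>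
     (\<forall>r > 2 * m. \<exists>D. (\<sigma> has_real_derivative D) (at r) \<and>
        (1 - 2 * m / r) * (3 / K) * D = cmc_v K H r / sqrt (cmc_P m K H r) + b)"

definition naked_shift_reversal :: "real \<Rightarrow> real \<Rightarrow> real \<Rightarrow> bool" where
  "naked_shift_reversal m K H \<longleftrightarrow> 3 * H / K > 8 * m ^ 3"

end

(*
  Solving the wave phase equation for the slope, with P - v^2 = r^3 (r - 2m) and b^2 = 1,
  gives  d sigma/dr = b K r^4 / (3 sqrt P (sqrt P - b v)),  whose denominator is positive
  outside the horizon, so sigma is strictly monotone with the sign of b K.
  For the outgoing phase (b K < 0) one has -b v ~ |K| r^3/3, hence d sigma/dr = O(r^-2) and
  sigma converges at infinity.
  For the ingoing phase (b K = |K|) the denominator at r = 2m is |v| (|v| - b v).  If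
  b v(2m) < 0, which is exactly the naked shift reversal condition, the slope extends
  continuously and positively to [2m, R], so it is bounded above and away from zero and sigma
  has a limit at the horizon (being Lipschitz there).  Otherwise b v >= 0 on (2m, oo), so
  sqrt P (sqrt P - b v) <= P - v^2 and the slope blows up like |K| r / (3 (r - 2m)).
*)
theory Submission
  imports Defs "HOL-Real_Asymp.Real_Asymp"
begin

lemma strict_mono_on_greaterThan_if_deriv_pos:
  fixes f :: "real \<Rightarrow> real"
  assumes "\<And>x. a < x \<Longrightarrow> (f has_real_derivative f' x) (at x)" and "\<And>x. a < x \<Longrightarrow> 0 < f' x"
  shows "strict_mono_on {a<..} f"
proof (rule monotone_onI)
  fix x y assume "x \<in> {a<..}" and "x < y"
  show "f x < f y"
  proof (rule DERIV_pos_imp_increasing[OF \<open>x < y\<close>])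
    fix z assume "x \<le> z"
    with \<open>x \<in> {a<..}\<close> have "a < z" by simp
    then show "\<exists>D. (f has_real_derivative D) (at z) \<and> 0 < D"
      using assms by blast
  qed
qed

lemma strict_antimono_on_greaterThan_if_deriv_neg:
  fixes f :: "real \<Rightarrow> real"
  assumes "\<And>x. a < x \<Longrightarrow> (f has_real_derivative f' x) (at x)" and "\<And>x. a < x \<Longrightarrow> f' x < 0"
  shows "strict_antimono_on {a<..} f"
proof (rule monotone_onI)
  fix x y assume "x \<in> {a<..}" and "x < y"
  show "f y < f x"
  proof (rule DERIV_neg_imp_decreasing[OF \<open>x < y\<close>])
    fix z assume "x \<le> z"
    with \<open>x \<in> {a<..}\<close> have "a < z" by simp
    then show "\<exists>D. (f has_real_derivative D) (at z) \<and> D < 0"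
      using assms by blast
  qed
qed

lemma lipschitz_on_if_deriv_bounded:
  fixes f :: "real \<Rightarrow> real"
  assumes "is_interval I" and "\<And>x. x \<in> I \<Longrightarrow> (f has_real_derivative f' x) (at x)"
    and "\<And>x. x \<in> I \<Longrightarrow> \<bar>f' x\<bar> \<le> C" and "0 \<le> C"
  shows "C-lipschitz_on I f"
proof (rule lipschitz_on_leI)
  fix x y assume x: "x \<in> I" and y: "y \<in> I" and "x \<le> y"
  show "dist (f x) (f y) \<le> C * dist x y"
  proof (cases "x = y")
    case False
    with \<open>x \<le> y\<close> have "x < y" by simp
    have "{x..y} \<subseteq> I"
      using assms(1) x y unfolding is_interval_1 by (meson atLeastAtMost_iff subsetI)
    then have "\<And>t. x \<le> t \<Longrightarrow> t \<le> y \<Longrightarrow> (f has_real_derivative f' t) (at t)"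
      using assms(2) by (meson atLeastAtMost_iff subsetD)
    then obtain z where z: "x < z" "z < y" and fxy: "f y - f x = (y - x) * f' z"
      using MVT2[OF \<open>x < y\<close>] by blast
    have "z \<in> I"
      using z \<open>{x..y} \<subseteq> I\<close> by auto
    then have "\<bar>f' z\<bar> \<le> C"
      by (rule assms(3))
    have "dist (f x) (f y) = \<bar>(y - x) * f' z\<bar>"
      by (metis dist_commute dist_real_def fxy)
    also have "\<dots> = (y - x) * \<bar>f' z\<bar>"
      using \<open>x < y\<close> by (simp add: abs_mult)
    also have "\<dots> \<le> (y - x) * C"
      using \<open>\<bar>f' z\<bar> \<le> C\<close> \<open>x < y\<close> by (intro mult_left_mono) auto
    finally show ?thesis
      using \<open>x < y\<close> by (simp add: dist_real_def mult.commute)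
  qed simp
qed fact

lemma tendsto_at_right_if_deriv_bounded:
  fixes f :: "real \<Rightarrow> real"
  assumes "a < b" and "\<And>x. x \<in> {a<..b} \<Longrightarrow> (f has_real_derivative f' x) (at x)"
    and "\<And>x. x \<in> {a<..b} \<Longrightarrow> \<bar>f' x\<bar> \<le> C"
  shows "\<exists>L. (f \<longlongrightarrow> L) (at_right a)"
proof -
  have "0 \<le> C"
    using assms(1) assms(3)[of b] by simp
  then have "uniformly_continuous_on {a<..b} f"
    using assms by (intro lipschitz_on_uniformly_continuous lipschitz_on_if_deriv_bounded) auto
  moreover have "a \<in> closure {a<..b}"
    using assms(1) by simp
  ultimately obtain L where "(f \<longlongrightarrow> L) (at a within {a<..b})"
    by (rule uniformly_continuous_on_extension_at_closure)
  moreover have "at a within {a<..b} = at_right a"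
    using assms(1) by (intro at_within_nhd[of _ "{..<b}"]) auto
  ultimately show ?thesis
    by auto
qed

lemma tendsto_at_top_if_deriv_bounded_inverse_square:
  fixes f :: "real \<Rightarrow> real"
  assumes "\<forall>\<^sub>F x in at_top. (f has_real_derivative f' x) (at x) \<and> \<bar>f' x\<bar> \<le> C / x\<^sup>2"
  shows "\<exists>L. (f \<longlongrightarrow> L) at_top"
proof -
  obtain a where a: "\<And>x. a \<le> x \<Longrightarrow> (f has_real_derivative f' x) (at x) \<and> \<bar>f' x\<bar> \<le> C / x\<^sup>2"
    using assms unfolding eventually_at_top_linorder by blast
  define c where "c = max a 1"
  \<comment> \<open>Under \<open>x = 1 / t\<close> the bound \<open>C / x\<^sup>2\<close> becomes a bound on the derivative of \<open>f (1 / t)\<close>.\<close>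
  have "\<exists>L. ((\<lambda>t. f (inverse t)) \<longlongrightarrow> L) (at_right 0)"
  proof (rule tendsto_at_right_if_deriv_bounded)
    show "0 < inverse c"
      by (simp add: c_def)
  next
    fix t assume t: "t \<in> {0<..inverse c}"
    then have "c \<le> inverse t"
      by (metis c_def greaterThanAtMost_iff inverse_inverse_eq le_imp_inverse_le max.strict_coboundedI2 zero_less_one)
    then have fa: "(f has_real_derivative f' (inverse t)) (at (inverse t))"
      and bound: "\<bar>f' (inverse t)\<bar> \<le> C / (inverse t)\<^sup>2"
      using a[of "inverse t"] by (auto simp: c_def)
    show "((\<lambda>t. f (inverse t)) has_real_derivative f' (inverse t) * - (inverse t ^ 2)) (at t)"
      using DERIV_chain2[OF fa DERIV_inverse] t by (simp add: power2_eq_square)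
    show "\<bar>f' (inverse t) * - (inverse t ^ 2)\<bar> \<le> C"
      using bound t by (simp add: abs_mult pos_le_divide_eq)
  qed
  then show ?thesis
    by (simp add: filterlim_at_top_to_right)
qed

definition phase_speed :: "real \<Rightarrow> real \<Rightarrow> real \<Rightarrow> real \<Rightarrow> real \<Rightarrow> real" where
  "phase_speed m K H b r =
     b * K * r ^ 4 / (3 * sqrt (cmc_P m K H r) * (sqrt (cmc_P m K H r) - b * cmc_v K H r))"

lemma cmc_P_eq:
  assumes "r \<noteq> 0"
  shows "cmc_P m K H r = (cmc_v K H r)\<^sup>2 + r ^ 3 * (r - 2 * m)"
  using assms by (simp add: cmc_P_def field_simps power_def)

lemma sqrt_cmc_P_squared:
  assumes "0 < r" and "2 * m \<le> r"
  shows "(sqrt (cmc_P m K H r))\<^sup>2 = (cmc_v K H r)\<^sup>2 + r ^ 3 * (r - 2 * m)"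
  using assms by (simp add: cmc_P_eq)

lemma abs_cmc_v_less_sqrt_cmc_P:
  assumes "0 \<le> m" and "2 * m < r"
  shows "\<bar>cmc_v K H r\<bar> < sqrt (cmc_P m K H r)"
proof -
  have "0 < r ^ 3 * (r - 2 * m)"
    using assms by simp
  then show ?thesis
    using assms by (simp add: cmc_P_eq real_less_rsqrt)
qed

lemma wave_phase_equation_imp_eq_phase_speed:
  assumes "0 \<le> m" and "2 * m < r" and "K \<noteq> 0" and "\<bar>b\<bar> = 1"
    and eq: "(1 - 2 * m / r) * (3 / K) * D = cmc_v K H r / sqrt (cmc_P m K H r) + b"
  shows "D = phase_speed m K H b r"
proof -
  define v S where "v = cmc_v K H r" and "S = sqrt (cmc_P m K H r)"
  have r: "0 < r"
    using assms by linarith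
  have vS: "\<bar>v\<bar> < S"
    unfolding v_def S_def using abs_cmc_v_less_sqrt_cmc_P assms by blast
  have b2: "b * b = 1"
    using \<open>\<bar>b\<bar> = 1\<close> by (metis abs_mult_self_eq mult_1)
  have "S\<^sup>2 = v\<^sup>2 + r ^ 3 * (r - 2 * m)"
    unfolding S_def v_def using r assms(2) by (simp add: sqrt_cmc_P_squared)
  then have Q: "r ^ 3 * (r - 2 * m) = (S + b * v) * (S - b * v)"
    using b2 by (simp add: algebra_simps power2_eq_square)
  have "\<bar>b * v\<bar> < S"
    using vS \<open>\<bar>b\<bar> = 1\<close> by (simp add: abs_mult)
  then have pos: "0 < S" "0 < S + b * v" "0 < S - b * v"
    by (auto simp: abs_less_iff)
  have "D * (3 * S * (r - 2 * m)) = K * r * (v + b * S)"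
    using eq r pos assms(3) unfolding v_def[symmetric] S_def[symmetric]
    by (simp add: field_simps)
  then have "D * (3 * S * (r ^ 3 * (r - 2 * m))) = K * r ^ 4 * (v + b * S)"
    by (simp add: eval_nat_numeral)
  also have "v + b * S = b * (S + b * v)"
    using b2 by (simp add: algebra_simps)
  finally have "(D * (3 * S * (S - b * v))) * (S + b * v) = (b * K * r ^ 4) * (S + b * v)"
    unfolding Q by (simp only: ac_simps)
  then have "D * (3 * S * (S - b * v)) = b * K * r ^ 4"
    using pos(2) by simp
  then show ?thesis
    unfolding phase_speed_def v_def[symmetric] S_def[symmetric] using pos
    by (simp add: eq_divide_eq)
qed

lemma wave_phase_solution_has_real_derivative:
  assumes "wave_phase_solution m K H b \<sigma>"
    and "0 \<le> m" and "K \<noteq> 0" and "\<bar>b\<bar> = 1" and "2 * m < r"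
  shows "(\<sigma> has_real_derivative phase_speed m K H b r) (at r)"
proof -
  obtain D where "(\<sigma> has_real_derivative D) (at r)"
    and "(1 - 2 * m / r) * (3 / K) * D = cmc_v K H r / sqrt (cmc_P m K H r) + b"
    using assms(1,5) unfolding wave_phase_solution_def by blast
  then show ?thesis
    using wave_phase_equation_imp_eq_phase_speed[OF assms(2,5,3,4)] by simp
qed

lemma sgn_phase_speed:
  assumes "0 \<le> m" and "2 * m < r" and "\<bar>b\<bar> = 1"
  shows "sgn (phase_speed m K H b r) = sgn (b * K)"
proof -
  have "\<bar>b * cmc_v K H r\<bar> < sqrt (cmc_P m K H r)"
    using abs_cmc_v_less_sqrt_cmc_P assms by (simp add: abs_mult)
  then have "0 < sqrt (cmc_P m K H r)" and "0 < sqrt (cmc_P m K H r) - b * cmc_v K H r"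
    by linarith+
  moreover have "0 < r"
    using assms by linarith
  ultimately have q: "0 < r ^ 4 / (3 * sqrt (cmc_P m K H r) * (sqrt (cmc_P m K H r) - b * cmc_v K H r))"
    (is "0 < ?q") by simp
  have "phase_speed m K H b r = (b * K) * ?q"
    unfolding phase_speed_def by simp
  then show ?thesis
    by (simp only: sgn_mult sgn_pos[OF q] mult_1_right)
qed

lemma wave_phase_solution_strict_mono_on:
  assumes "wave_phase_solution m K H b \<sigma>" and "0 \<le> m" and "\<bar>b\<bar> = 1" and "0 < b * K"
  shows "strict_mono_on {2 * m<..} \<sigma>"
proof (rule strict_mono_on_greaterThan_if_deriv_pos)
  fix r assume r: "2 * m < r"
  have "K \<noteq> 0"
    using assms(4) by auto
  then show "(\<sigma> has_real_derivative phase_speed m K H b r) (at r)"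
    using wave_phase_solution_has_real_derivative assms(1-3) r by blast
  show "0 < phase_speed m K H b r"
    using sgn_phase_speed[OF assms(2) r assms(3), of K H] assms(4) by (simp add: sgn_1_pos)
qed

lemma wave_phase_solution_strict_antimono_on:
  assumes "wave_phase_solution m K H b \<sigma>" and "0 \<le> m" and "\<bar>b\<bar> = 1" and "b * K < 0"
  shows "strict_antimono_on {2 * m<..} \<sigma>"
proof (rule strict_antimono_on_greaterThan_if_deriv_neg)
  fix r assume r: "2 * m < r"
  have "K \<noteq> 0"
    using assms(4) by auto
  then show "(\<sigma> has_real_derivative phase_speed m K H b r) (at r)"
    using wave_phase_solution_has_real_derivative assms(1-3) r by blast
  show "phase_speed m K H b r < 0"
    using sgn_phase_speed[OF assms(2) r assms(3), of K H] assms(4) by (simp add: sgn_1_neg)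
qed

lemma abs_phase_speed_le:
  assumes "0 \<le> m" and "2 * m < r" and "\<bar>b\<bar> = 1" and "b * K < 0" and "6 * \<bar>H\<bar> \<le> \<bar>K\<bar> * r ^ 3"
  shows "\<bar>phase_speed m K H b r\<bar> \<le> 6 / \<bar>K\<bar> / r\<^sup>2"
proof -
  define v S where "v = cmc_v K H r" and "S = sqrt (cmc_P m K H r)"
  have r: "0 < r"
    using assms by linarith
  have bK: "\<bar>b * K\<bar> = \<bar>K\<bar>"
    using assms(3) by (simp add: abs_mult)
  then have bK': "- (b * K) = \<bar>K\<bar>"
    using assms(4) by simp
  have "- (b * v) = \<bar>K\<bar> * r ^ 3 / 3 + b * H"
    unfolding v_def cmc_v_def bK'[symmetric] by (simp add: algebra_simps)
  moreover have "\<bar>b * H\<bar> = \<bar>H\<bar>"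
    using assms(3) by (simp add: abs_mult)
  ultimately have a: "\<bar>K\<bar> * r ^ 3 / 6 \<le> - (b * v)"
    using assms(5) by (auto simp: abs_le_iff)
  have "\<bar>b * v\<bar> < S"
    unfolding v_def S_def using abs_cmc_v_less_sqrt_cmc_P assms(1-3) by (simp add: abs_mult)
  then have Sa: "- (b * v) \<le> S" and pos: "0 < S" "0 < S - b * v"
    by linarith+
  have K: "0 < \<bar>K\<bar>"
    using assms(4) by auto
  have "K\<^sup>2 * r ^ 6 / 18 = (\<bar>K\<bar> * r ^ 3 / 6) * (2 * (\<bar>K\<bar> * r ^ 3 / 6))"
    by (simp add: power2_eq_square power_def)
  also have "\<dots> \<le> S * (S - b * v)"
    using a Sa \<open>\<bar>b * v\<bar> < S\<close> r by (intro mult_mono) auto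
  finally have den: "K\<^sup>2 * r ^ 6 / 18 \<le> S * (S - b * v)" .
  have "0 < K\<^sup>2 * r ^ 6 / 18"
    using K r by simp
  have "\<bar>phase_speed m K H b r\<bar> = \<bar>K\<bar> * r ^ 4 / (3 * (S * (S - b * v)))"
    using pos assms(3)
    unfolding phase_speed_def v_def[symmetric] S_def[symmetric] by (simp add: abs_mult mult.assoc)
  also have "\<dots> \<le> \<bar>K\<bar> * r ^ 4 / (3 * (K\<^sup>2 * r ^ 6 / 18))"
    using den \<open>0 < K\<^sup>2 * r ^ 6 / 18\<close> pos r by (intro divide_left_mono) auto
  also have "\<dots> = 6 / \<bar>K\<bar> / r\<^sup>2"
    using K r by (simp add: field_simps power2_eq_square power_def)
  finally show ?thesis .
qed

lemma wave_phase_solution_tendsto_at_top: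
  assumes "wave_phase_solution m K H b \<sigma>" and "0 \<le> m" and "\<bar>b\<bar> = 1" and "b * K < 0"
  shows "\<exists>L. (\<sigma> \<longlongrightarrow> L) at_top"
proof (rule tendsto_at_top_if_deriv_bounded_inverse_square)
  have "K \<noteq> 0"
    using assms(4) by auto
  then have "filterlim (\<lambda>r. \<bar>K\<bar> * r ^ 3) at_top at_top"
    by real_asymp
  then have "\<forall>\<^sub>F r in at_top. 6 * \<bar>H\<bar> \<le> \<bar>K\<bar> * r ^ 3"
    by (simp add: filterlim_at_top)
  moreover have "\<forall>\<^sub>F r in at_top. 2 * m < r"
    by (rule eventually_gt_at_top)
  ultimately show "\<forall>\<^sub>F r in at_top. (\<sigma> has_real_derivative phase_speed m K H b r) (at r)
      \<and> \<bar>phase_speed m K H b r\<bar> \<le> 6 / \<bar>K\<bar> / r\<^sup>2"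
    by eventually_elim
      (use assms \<open>K \<noteq> 0\<close> in \<open>blast intro: wave_phase_solution_has_real_derivative abs_phase_speed_le\<close>)
qed

lemma naked_shift_reversal_iff:
  assumes "0 < b * K"
  shows "naked_shift_reversal m K H \<longleftrightarrow> b * cmc_v K H (2 * m) < 0"
proof -
  have "K \<noteq> 0"
    using assms by auto
  then have "b * cmc_v K H (2 * m) = (b * K / 3) * (8 * m ^ 3 - 3 * H / K)"
    by (simp add: cmc_v_def field_simps)
  also have "\<dots> < 0 \<longleftrightarrow> 8 * m ^ 3 - 3 * H / K < 0"
    using assms by (auto simp: mult_less_0_iff zero_less_mult_iff)
  finally show ?thesis
    by (auto simp: naked_shift_reversal_def)
qed

lemma phase_speed_ge:
  assumes "0 \<le> m" and "2 * m < r" and "\<bar>b\<bar> = 1" and "0 < b * K" and "0 \<le> b * cmc_v K H r"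
  shows "b * K * r / (3 * (r - 2 * m)) \<le> phase_speed m K H b r"
proof -
  define v S where "v = cmc_v K H r" and "S = sqrt (cmc_P m K H r)"
  have r: "0 < r"
    using assms by linarith
  have "\<bar>b * v\<bar> < S"
    unfolding v_def S_def using abs_cmc_v_less_sqrt_cmc_P assms(1-3) by (simp add: abs_mult)
  then have pos: "0 < S" "0 < S - b * v"
    by linarith+
  have "b * b = 1"
    using assms(3) by (metis abs_mult_self_eq mult_1)
  moreover have "S\<^sup>2 = v\<^sup>2 + r ^ 3 * (r - 2 * m)"
    unfolding S_def v_def using r assms(2) by (simp add: sqrt_cmc_P_squared)
  ultimately have "r ^ 3 * (r - 2 * m) = (S + b * v) * (S - b * v)"
    by (simp add: algebra_simps power2_eq_square)
  also have "\<dots> \<ge> S * (S - b * v)"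
    using pos assms(5) unfolding v_def by (intro mult_right_mono) auto
  finally have den: "S * (S - b * v) \<le> r ^ 3 * (r - 2 * m)" .
  have "b * K * r / (3 * (r - 2 * m)) = b * K * r ^ 4 / (3 * (r ^ 3 * (r - 2 * m)))"
    using r by (simp add: power_def)
  also have "\<dots> \<le> b * K * r ^ 4 / (3 * (S * (S - b * v)))"
    using den pos assms(2,4) r by (intro divide_left_mono) auto
  also have "\<dots> = phase_speed m K H b r"
    unfolding phase_speed_def v_def S_def by (simp add: mult.assoc)
  finally show ?thesis .
qed

lemma filterlim_phase_speed_at_right_horizon:
  assumes "0 < m" and "\<bar>b\<bar> = 1" and "0 < b * K" and "0 \<le> b * cmc_v K H (2 * m)"
  shows "filterlim (phase_speed m K H b) at_top (at_right (2 * m))"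
proof (rule filterlim_at_top_mono)
  show "filterlim (\<lambda>r. b * K * r / (3 * (r - 2 * m))) at_top (at_right (2 * m))"
    using assms(1,3) by real_asymp
  have mono: "b * cmc_v K H (2 * m) \<le> b * cmc_v K H r" if "2 * m < r" for r
  proof -
    have "(2 * m) ^ 3 \<le> r ^ 3"
      using that assms(1) by (intro power_mono) auto
    then have "b * K * (2 * m) ^ 3 \<le> b * K * r ^ 3"
      using assms(3) by (intro mult_left_mono) auto
    then show ?thesis
      by (simp add: cmc_v_def algebra_simps)
  qed
  show "\<forall>\<^sub>F r in at_right (2 * m). b * K * r / (3 * (r - 2 * m)) \<le> phase_speed m K H b r"
    using eventually_at_right_less
  proof (rule eventually_mono)
    fix r assume "2 * m < r"
    with mono assms show "b * K * r / (3 * (r - 2 * m)) \<le> phase_speed m K H b r"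
      by (intro phase_speed_ge) (auto intro: order_trans[OF assms(4)])
  qed
qed

lemma phase_speed_bounds_on_Icc:
  assumes "0 < m" and "\<bar>b\<bar> = 1" and "0 < b * K" and "b * cmc_v K H (2 * m) < 0" and "2 * m < R"
  obtains c C where "0 < c" and "\<And>r. r \<in> {2 * m..R} \<Longrightarrow> c \<le> phase_speed m K H b r \<and> phase_speed m K H b r \<le> C"
proof -
  have den: "0 < sqrt (cmc_P m K H r) \<and> b * cmc_v K H r < sqrt (cmc_P m K H r)" if r: "r \<in> {2 * m..R}" for r
  proof (cases "r = 2 * m")
    case True
    \<comment> \<open>At the horizon \<open>P = v\<^sup>2\<close>, and the reversal condition makes \<open>b v\<close> negative there.\<close>
    then have "sqrt (cmc_P m K H r) = \<bar>b * cmc_v K H r\<bar>"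
      using assms(1,2) by (simp add: cmc_P_eq abs_mult)
    then show ?thesis
      using assms(4) True by simp
  next
    case False
    with r have "\<bar>b * cmc_v K H r\<bar> < sqrt (cmc_P m K H r)"
      using abs_cmc_v_less_sqrt_cmc_P assms(1,2) by (simp add: abs_mult)
    then show ?thesis
      by linarith
  qed
  have nz: "3 * sqrt (cmc_P m K H r) * (sqrt (cmc_P m K H r) - b * cmc_v K H r) \<noteq> 0"
    if "r \<in> {2 * m..R}" for r
    using den[OF that] by simp
  have pos: "0 < phase_speed m K H b r" if "r \<in> {2 * m..R}" for r
    using den[OF that] assms(1,3) that by (simp add: phase_speed_def)
  have "continuous_on {2 * m..R} (\<lambda>r. cmc_P m K H r)"
    unfolding cmc_P_def cmc_v_def using assms(1) by (intro continuous_intros) auto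
  moreover have "continuous_on {2 * m..R} (cmc_v K H)"
    unfolding cmc_v_def by (intro continuous_intros) auto
  ultimately have cont: "continuous_on {2 * m..R} (phase_speed m K H b)"
    unfolding phase_speed_def by (intro continuous_intros ballI nz)
  have ne: "{2 * m..R} \<noteq> {}"
    using assms(5) by simp
  obtain r1 where r1: "r1 \<in> {2 * m..R}" "\<And>r. r \<in> {2 * m..R} \<Longrightarrow> phase_speed m K H b r1 \<le> phase_speed m K H b r"
    using continuous_attains_inf[OF compact_Icc ne cont] by blast
  obtain r2 where "\<And>r. r \<in> {2 * m..R} \<Longrightarrow> phase_speed m K H b r \<le> phase_speed m K H b r2"
    using continuous_attains_sup[OF compact_Icc ne cont] by blast
  with r1 pos show ?thesis
    using that by blast
qed

lemma wave_phase_solution_bounded_at_horizon_iff: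
  assumes \<sigma>: "wave_phase_solution m K H b \<sigma>" and "0 < m" and "\<bar>b\<bar> = 1" and "0 < b * K"
  shows "((\<exists>L. (\<sigma> \<longlongrightarrow> L) (at_right (2 * m)))
          \<and> (\<forall>R > 2 * m. \<exists>c C. 0 < c \<and>
                 (\<forall>r \<in> {2 * m<..R}. c \<le> \<bar>deriv \<sigma> r\<bar> \<and> \<bar>deriv \<sigma> r\<bar> \<le> C)))
        \<longleftrightarrow> b * cmc_v K H (2 * m) < 0"
    (is "?bounded \<longleftrightarrow> _")
proof -
  have "K \<noteq> 0"
    using assms(4) by auto
  then have der: "(\<sigma> has_real_derivative phase_speed m K H b r) (at r)" if "2 * m < r" for r
    using wave_phase_solution_has_real_derivative \<sigma> assms(2,3) that by simp
  have abs_deriv: "\<bar>deriv \<sigma> r\<bar> = phase_speed m K H b r" if "2 * m < r" for r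
  proof -
    have "0 < phase_speed m K H b r"
      using sgn_phase_speed[OF _ that assms(3), of K H] assms(2,4) by (simp add: sgn_1_pos)
    then show ?thesis
      using DERIV_imp_deriv[OF der[OF that]] by simp
  qed
  show ?thesis
  proof
    assume bounded: ?bounded
    show "b * cmc_v K H (2 * m) < 0"
    proof (rule ccontr)
      assume "\<not> b * cmc_v K H (2 * m) < 0"
      then have "filterlim (phase_speed m K H b) at_top (at_right (2 * m))"
        using filterlim_phase_speed_at_right_horizon assms(2-4) by simp
      moreover obtain C where "\<forall>r \<in> {2 * m<..2 * m + 1}. \<bar>deriv \<sigma> r\<bar> \<le> C"
        using bounded by (meson less_add_one)
      ultimately have "\<forall>\<^sub>F r in at_right (2 * m). C < phase_speed m K H b r"
        and "\<forall>\<^sub>F r in at_right (2 * m). phase_speed m K H b r \<le> C"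
        unfolding eventually_at_right_field filterlim_at_top_dense
        by (auto intro!: exI[of _ "2 * m + 1"] simp: abs_deriv)
      then have "\<forall>\<^sub>F r in at_right (2 * m). False"
        by eventually_elim auto
      then show False
        by (simp add: trivial_limit_at_right_real)
    qed
  next
    assume reversal: "b * cmc_v K H (2 * m) < 0"
    have bounds: "\<exists>c C. 0 < c \<and> (\<forall>r \<in> {2 * m<..R}. c \<le> \<bar>deriv \<sigma> r\<bar> \<and> \<bar>deriv \<sigma> r\<bar> \<le> C)"
      if R: "2 * m < R" for R
    proof -
      obtain c C where "0 < c" "\<And>r. r \<in> {2 * m..R} \<Longrightarrow> c \<le> phase_speed m K H b r \<and> phase_speed m K H b r \<le> C"
        using phase_speed_bounds_on_Icc[OF assms(2-4) reversal R] by blast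
      then show ?thesis
        by (intro exI[of _ c] exI[of _ C]) (auto simp: abs_deriv)
    qed
    obtain c C where "0 < c" and bound: "\<And>r. r \<in> {2 * m..2 * m + 1} \<Longrightarrow> c \<le> phase_speed m K H b r \<and> phase_speed m K H b r \<le> C"
      using phase_speed_bounds_on_Icc[OF assms(2-4) reversal, of "2 * m + 1"] by auto
    have "\<exists>L. (\<sigma> \<longlongrightarrow> L) (at_right (2 * m))"
    proof (rule tendsto_at_right_if_deriv_bounded)
      fix r assume r: "r \<in> {2 * m<..2 * m + 1}"
      then show "(\<sigma> has_real_derivative phase_speed m K H b r) (at r)"
        by (auto intro: der)
      show "\<bar>phase_speed m K H b r\<bar> \<le> C"
        using bound[of r] r \<open>0 < c\<close> by auto
    qed simp
    with bounds show ?bounded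
      by blast
  qed
qed

theorem theorem1:
  fixes m K H :: real and \<sigma>p \<sigma>m :: "real \<Rightarrow> real"
  assumes "m > 0" and "K \<noteq> 0"
    and "wave_phase_solution m K H (b_plus K) \<sigma>p"
    and "wave_phase_solution m K H (b_minus K) \<sigma>m"
  shows "(strict_mono_on {2 * m<..} \<sigma>p \<or> strict_antimono_on {2 * m<..} \<sigma>p)
       \<and> (strict_mono_on {2 * m<..} \<sigma>m \<or> strict_antimono_on {2 * m<..} \<sigma>m)
       \<and> (\<exists>L. (\<sigma>p \<longlongrightarrow> L) at_top)
       \<and> (((\<exists>L. (\<sigma>m \<longlongrightarrow> L) (at_right (2 * m)))
            \<and> (\<forall>R > 2 * m. \<exists>c C. 0 < c \<and>
                 (\<forall>r \<in> {2 * m<..R}. c \<le> \<bar>deriv \<sigma>m r\<bar> \<and> \<bar>deriv \<sigma>m r\<bar> \<le> C)))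
          \<longleftrightarrow> naked_shift_reversal m K H)"
proof -
  have m: "0 \<le> m"
    using assms(1) by simp
  have plus: "\<bar>b_plus K\<bar> = 1" "b_plus K * K < 0"
    using assms(2) by (auto simp: b_plus_def)
  have minus: "\<bar>b_minus K\<bar> = 1" "0 < b_minus K * K"
    using assms(2) by (auto simp: b_minus_def)
  show ?thesis
    using wave_phase_solution_strict_antimono_on[OF assms(3) m plus]
      wave_phase_solution_strict_mono_on[OF assms(4) m minus]
      wave_phase_solution_tendsto_at_top[OF assms(3) m plus]
      wave_phase_solution_bounded_at_horizon_iff[OF assms(4,1) minus]
      naked_shift_reversal_iff[OF minus(2)]
    by blast
qed

end
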